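(* Let $(G,\preceq)$ be a cc sponge group. Let $C\subseteq G$ be invariant under conjugation, with $\mathbf{1}\in C$ and $\mathbf{1}\preceq c$ for all $c\in C$, and assume that for all $x,y\in G$: if $y\in C$, $\mathbf{1}\preceq x$ and $x\preceq y$, then $x\in C$ and $x^{-1}\cdot y\in C$. Define the relation $\sqsubseteq$ on $G$ by $x\sqsubseteq y\iff x^{-1}\cdot y\in C$. Then $(G,\sqsubseteq)$ is a cc sponge group.
   Context: An orientation is a reflexive, antisymmetric binary relation. An oriented group is a group $G$ (operation $\cdot$, neutral element $\mathbf{1}$) with an orientation $\preceq$ such that $x\preceq y$ implies $x\cdot z\preceq y\cdot z$ and $z\cdot x\preceq z\cdot y$ for all $x,y,z$. A subset $P$ is right-bounded if some $s$ has $p\preceq s$ for all $p\in P$; the join of $P$ is an $x$ with $p\preceq x$ for all $p\in P$ and $x\preceq y$ whenever $p\preceq y$ for all $p\in P$. An oriented set is a cc sponge if every nonempty right-bounded subset has a join. A cc sponge group is an oriented group that is a cc sponge. *)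

theory Defs
  imports "HOL-Algebra.Group"
begin

definition orientation :: "'a set \<Rightarrow> ('a \<Rightarrow> 'a \<Rightarrow> bool) \<Rightarrow> bool" where
  "orientation S R \<longleftrightarrow>
     (\<forall>x\<in>S. R x x) \<and> (\<forall>x\<in>S. \<forall>y\<in>S. R x y \<and> R y x \<longrightarrow> x = y)"

definition oriented_group :: "('a, 'b) monoid_scheme \<Rightarrow> ('a \<Rightarrow> 'a \<Rightarrow> bool) \<Rightarrow> bool" where
  "oriented_group G R \<longleftrightarrow> group G \<and> orientation (carrier G) R \<and>
     (\<forall>x\<in>carrier G. \<forall>y\<in>carrier G. \<forall>z\<in>carrier G. R x y \<longrightarrow>
        R (x \<otimes>\<^bsub>G\<^esub> z) (y \<otimes>\<^bsub>G\<^esub> z) \<and> R (z \<otimes>\<^bsub>G\<^esub> x) (z \<otimes>\<^bsub>G\<^esub> y))"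

definition right_bounded :: "'a set \<Rightarrow> ('a \<Rightarrow> 'a \<Rightarrow> bool) \<Rightarrow> 'a set \<Rightarrow> bool" where
  "right_bounded S R P \<longleftrightarrow> (\<exists>s\<in>S. \<forall>p\<in>P. R p s)"

definition is_join :: "'a set \<Rightarrow> ('a \<Rightarrow> 'a \<Rightarrow> bool) \<Rightarrow> 'a set \<Rightarrow> 'a \<Rightarrow> bool" where
  "is_join S R P x \<longleftrightarrow> x \<in> S \<and> (\<forall>p\<in>P. R p x) \<and>
     (\<forall>y\<in>S. (\<forall>p\<in>P. R p y) \<longrightarrow> R x y)"

definition cc_sponge :: "'a set \<Rightarrow> ('a \<Rightarrow> 'a \<Rightarrow> bool) \<Rightarrow> bool" where
  "cc_sponge S R \<longleftrightarrow> orientation S R \<and>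
     (\<forall>P. P \<subseteq> S \<and> P \<noteq> {} \<and> right_bounded S R P \<longrightarrow> (\<exists>x. is_join S R P x))"

definition cc_sponge_group :: "('a, 'b) monoid_scheme \<Rightarrow> ('a \<Rightarrow> 'a \<Rightarrow> bool) \<Rightarrow> bool" where
  "cc_sponge_group G R \<longleftrightarrow> oriented_group G R \<and> cc_sponge (carrier G) R"

end

theory Submission
  imports Defs
begin

text \<open>Since every element of \<open>C\<close> is positive, the relation \<open>x \<sqsubseteq> y \<longleftrightarrow> x\<inverse> y \<in> C\<close> is
  contained in \<open>\<preceq>\<close>. It is a group orientation because \<open>C\<close> is conjugation invariant and pointed
  (\<open>C \<inter> C\<inverse> = {\<one>}\<close> by antisymmetry of \<open>\<preceq>\<close>). Convexity of \<open>C\<close> makes the two relations agree on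
  intervals: \<open>x \<preceq> y \<preceq> z\<close> and \<open>x \<sqsubseteq> z\<close> give \<open>x \<sqsubseteq> y \<sqsubseteq> z\<close>. Hence a set with a \<open>\<sqsubseteq>\<close>-upper bound \<open>s\<close>
  has a \<open>\<preceq>\<close>-join \<open>j \<preceq> s\<close>, and \<open>j\<close> is also its \<open>\<sqsubseteq>\<close>-join.\<close>

definition cone_order :: "('a, 'b) monoid_scheme \<Rightarrow> 'a set \<Rightarrow> 'a \<Rightarrow> 'a \<Rightarrow> bool" where
  "cone_order G C x y \<longleftrightarrow> inv\<^bsub>G\<^esub> x \<otimes>\<^bsub>G\<^esub> y \<in> C"

lemma cc_sponge_groupD:
  assumes "cc_sponge_group G R"
  shows "oriented_group G R" "cc_sponge (carrier G) R"
  using assms unfolding cc_sponge_group_def by blast+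

lemma oriented_groupD:
  assumes "oriented_group G R"
  shows "group G" "orientation (carrier G) R"
    and "\<lbrakk>x \<in> carrier G; y \<in> carrier G; z \<in> carrier G; R x y\<rbrakk> \<Longrightarrow> R (x \<otimes>\<^bsub>G\<^esub> z) (y \<otimes>\<^bsub>G\<^esub> z)"
    and "\<lbrakk>x \<in> carrier G; y \<in> carrier G; z \<in> carrier G; R x y\<rbrakk> \<Longrightarrow> R (z \<otimes>\<^bsub>G\<^esub> x) (z \<otimes>\<^bsub>G\<^esub> y)"
  using assms unfolding oriented_group_def by blast+

context group
begin

lemma inv_mult_inv_mult_cancel:
  assumes "x \<in> carrier G" "y \<in> carrier G" "z \<in> carrier G"
  shows "inv (inv x \<otimes> y) \<otimes> (inv x \<otimes> z) = inv y \<otimes> z"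
proof -
  have "x \<otimes> (inv x \<otimes> z) = z"
    using assms by (simp add: m_assoc[symmetric])
  then show ?thesis
    using assms by (simp add: inv_mult_group m_assoc)
qed

lemma oriented_group_le_iff_one_le:
  assumes "oriented_group G R" "x \<in> carrier G" "y \<in> carrier G"
  shows "R x y \<longleftrightarrow> R \<one> (inv x \<otimes> y)"
proof
  assume "R x y"
  then show "R \<one> (inv x \<otimes> y)"
    using oriented_groupD(4)[OF assms(1), of x y "inv x"] assms by simp
next
  assume "R \<one> (inv x \<otimes> y)"
  then show "R x y"
    using oriented_groupD(4)[OF assms(1), of \<one> "inv x \<otimes> y" x] assms by (simp add: m_assoc[symmetric])
qed

lemma oriented_group_pos_inv_pos_eq_one:
  assumes "oriented_group G R" "c \<in> carrier G" "R \<one> c" "R \<one> (inv c)"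
  shows "c = \<one>"
proof -
  have "R (\<one> \<otimes> c) (inv c \<otimes> c)"
    using oriented_groupD(3)[OF assms(1), of \<one> "inv c" c] assms by simp
  then have "R c \<one>"
    using assms(2) by simp
  then show ?thesis
    using oriented_groupD(2)[OF assms(1)] assms(2,3) unfolding orientation_def by simp
qed

lemma positive_cone_pointed:
  assumes "oriented_group G R" "C \<subseteq> carrier G" "\<And>c. c \<in> C \<Longrightarrow> R \<one> c"
    and "c \<in> C" "inv c \<in> C"
  shows "c = \<one>"
  using assms by (intro oriented_group_pos_inv_pos_eq_one[OF assms(1)]) auto

lemma orientation_cone_order:
  assumes one: "\<one> \<in> C" and pointed: "\<And>c. c \<in> C \<Longrightarrow> inv c \<in> C \<Longrightarrow> c = \<one>"
  shows "orientation (carrier G) (cone_order G C)"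
  unfolding orientation_def cone_order_def
proof (intro conjI ballI impI)
  fix x assume "x \<in> carrier G"
  then show "inv x \<otimes> x \<in> C" using one by simp
next
  fix x y assume xy: "x \<in> carrier G" "y \<in> carrier G" "inv x \<otimes> y \<in> C \<and> inv y \<otimes> x \<in> C"
  then have "inv (inv x \<otimes> y) = inv y \<otimes> x"
    by (simp add: inv_mult_group)
  with xy pointed have "x \<otimes> (inv x \<otimes> y) = x"
    by simp
  then show "x = y"
    using xy by (simp add: m_assoc[symmetric])
qed

lemma oriented_group_cone_order:
  assumes one: "\<one> \<in> C" and pointed: "\<And>c. c \<in> C \<Longrightarrow> inv c \<in> C \<Longrightarrow> c = \<one>"
    and conj: "\<And>g c. g \<in> carrier G \<Longrightarrow> c \<in> C \<Longrightarrow> g \<otimes> c \<otimes> inv g \<in> C"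
  shows "oriented_group G (cone_order G C)"
  unfolding oriented_group_def
proof (intro conjI ballI impI)
  show "group G" ..
  show "orientation (carrier G) (cone_order G C)"
    using orientation_cone_order[OF one pointed] .
next
  fix x y z assume xyz: "x \<in> carrier G" "y \<in> carrier G" "z \<in> carrier G" and "cone_order G C x y"
  then have "inv z \<otimes> (inv x \<otimes> y) \<otimes> inv (inv z) \<in> C"
    using conj[of "inv z" "inv x \<otimes> y"] xyz unfolding cone_order_def by simp
  then show "cone_order G C (x \<otimes> z) (y \<otimes> z)"
    using xyz unfolding cone_order_def by (simp add: inv_mult_group m_assoc)
  have "inv (z \<otimes> x) \<otimes> (z \<otimes> y) = inv x \<otimes> y"
    using xyz inv_mult_inv_mult_cancel[of "inv z" x y] by (simp add: inv_mult_group)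
  then show "cone_order G C (z \<otimes> x) (z \<otimes> y)"
    using \<open>cone_order G C x y\<close> unfolding cone_order_def by simp
qed

lemma cone_order_imp_le:
  assumes "oriented_group G R" and pos: "\<And>c. c \<in> C \<Longrightarrow> R \<one> c"
    and "x \<in> carrier G" "y \<in> carrier G" "cone_order G C x y"
  shows "R x y"
proof -
  have "R \<one> (inv x \<otimes> y)"
    using pos assms(5) unfolding cone_order_def .
  then show ?thesis
    using oriented_group_le_iff_one_le[OF assms(1,3,4)] by simp
qed

lemma cone_order_interval:
  assumes "oriented_group G R"
    and convex: "\<And>x y. \<lbrakk>x \<in> carrier G; y \<in> carrier G; y \<in> C; R \<one> x; R x y\<rbrakk> \<Longrightarrow>
        x \<in> C \<and> inv x \<otimes> y \<in> C"
    and xyz: "x \<in> carrier G" "y \<in> carrier G" "z \<in> carrier G"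
    and "R x y" "R y z" "cone_order G C x z"
  shows "cone_order G C x y \<and> cone_order G C y z"
proof -
  have "R \<one> (inv x \<otimes> y)"
    using oriented_group_le_iff_one_le[OF assms(1) xyz(1,2)] \<open>R x y\<close> by simp
  moreover have "R (inv x \<otimes> y) (inv x \<otimes> z)"
    using oriented_groupD(4)[OF assms(1), of y z "inv x"] xyz \<open>R y z\<close> by simp
  ultimately have "inv x \<otimes> y \<in> C \<and> inv (inv x \<otimes> y) \<otimes> (inv x \<otimes> z) \<in> C"
    using convex[of "inv x \<otimes> y" "inv x \<otimes> z"] xyz \<open>cone_order G C x z\<close>
    unfolding cone_order_def by simp
  then show ?thesis
    using xyz inv_mult_inv_mult_cancel unfolding cone_order_def by simp
qed

lemma is_join_cone_order:
  assumes "oriented_group G R"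
    and pos: "\<And>c. c \<in> C \<Longrightarrow> R \<one> c"
    and convex: "\<And>x y. \<lbrakk>x \<in> carrier G; y \<in> carrier G; y \<in> C; R \<one> x; R x y\<rbrakk> \<Longrightarrow>
        x \<in> C \<and> inv x \<otimes> y \<in> C"
    and P: "P \<subseteq> carrier G" "P \<noteq> {}"
    and s: "s \<in> carrier G" "\<forall>p\<in>P. cone_order G C p s"
    and j: "is_join (carrier G) R P j"
  shows "is_join (carrier G) (cone_order G C) P j"
proof -
  have j_carrier: "j \<in> carrier G" and j_upper: "\<forall>p\<in>P. R p j"
    and j_least: "\<And>y. y \<in> carrier G \<Longrightarrow> \<forall>p\<in>P. R p y \<Longrightarrow> R j y"
    using j unfolding is_join_def by blast+
  have j_below: "R j y" if "y \<in> carrier G" "\<forall>p\<in>P. cone_order G C p y" for y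
    using j_least cone_order_imp_le[OF assms(1) pos] P(1) that by blast
  have "cone_order G C p j" if "p \<in> P" for p
    using cone_order_interval[OF assms(1) convex, of p j s] that P(1) s j_carrier j_upper j_below
    by blast
  moreover have "cone_order G C j y" if "y \<in> carrier G" "\<forall>p\<in>P. cone_order G C p y" for y
  proof -
    obtain p where "p \<in> P" using P(2) by blast
    then show ?thesis
      using cone_order_interval[OF assms(1) convex, of p j y] that P(1) j_carrier j_upper j_below
      by blast
  qed
  ultimately show ?thesis
    unfolding is_join_def using j_carrier by blast
qed

lemma cc_sponge_cone_order:
  assumes "oriented_group G R" "cc_sponge (carrier G) R"
    and "C \<subseteq> carrier G" "\<one> \<in> C" and pos: "\<And>c. c \<in> C \<Longrightarrow> R \<one> c"
    and convex: "\<And>x y. \<lbrakk>x \<in> carrier G; y \<in> carrier G; y \<in> C; R \<one> x; R x y\<rbrakk> \<Longrightarrow>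
        x \<in> C \<and> inv x \<otimes> y \<in> C"
  shows "cc_sponge (carrier G) (cone_order G C)"
  unfolding cc_sponge_def
proof (intro conjI allI impI)
  show "orientation (carrier G) (cone_order G C)"
    using orientation_cone_order[OF assms(4) positive_cone_pointed[OF assms(1,3) pos]] .
next
  fix P assume P: "P \<subseteq> carrier G \<and> P \<noteq> {} \<and> right_bounded (carrier G) (cone_order G C) P"
  then obtain s where s: "s \<in> carrier G" "\<forall>p\<in>P. cone_order G C p s"
    unfolding right_bounded_def by blast
  then have "right_bounded (carrier G) R P"
    unfolding right_bounded_def using cone_order_imp_le[OF assms(1) pos] P by blast
  then obtain j where "is_join (carrier G) R P j"
    using assms(2) P unfolding cc_sponge_def by blast
  then show "\<exists>j. is_join (carrier G) (cone_order G C) P j"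
    using is_join_cone_order[OF assms(1) pos convex _ _ s] P by blast
qed

end

theorem mainTheorem10:
  fixes G :: "('a, 'b) monoid_scheme" and R :: "'a \<Rightarrow> 'a \<Rightarrow> bool" and C :: "'a set"
  assumes sponge: "cc_sponge_group G R"
    and C_sub: "C \<subseteq> carrier G"
    and C_conj: "\<forall>g\<in>carrier G. \<forall>c\<in>C. g \<otimes>\<^bsub>G\<^esub> c \<otimes>\<^bsub>G\<^esub> inv\<^bsub>G\<^esub> g \<in> C"
    and C_one: "\<one>\<^bsub>G\<^esub> \<in> C"
    and C_pos: "\<forall>c\<in>C. R \<one>\<^bsub>G\<^esub> c"
    and C_convex: "\<forall>x\<in>carrier G. \<forall>y\<in>carrier G.
        y \<in> C \<and> R \<one>\<^bsub>G\<^esub> x \<and> R x y \<longrightarrow> x \<in> C \<and> inv\<^bsub>G\<^esub> x \<otimes>\<^bsub>G\<^esub> y \<in> C"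
  shows "cc_sponge_group G (\<lambda>x y. inv\<^bsub>G\<^esub> x \<otimes>\<^bsub>G\<^esub> y \<in> C)"
proof -
  have oriented: "oriented_group G R" and sponge_R: "cc_sponge (carrier G) R"
    using cc_sponge_groupD[OF sponge] by blast+
  interpret group G
    using oriented_groupD(1)[OF oriented] .
  have "oriented_group G (cone_order G C)"
    using oriented_group_cone_order[OF C_one positive_cone_pointed[OF oriented C_sub]] C_pos C_conj
    by blast
  moreover have "cc_sponge (carrier G) (cone_order G C)"
    using cc_sponge_cone_order[OF oriented sponge_R C_sub C_one] C_pos C_convex by blast
  ultimately have "cc_sponge_group G (cone_order G C)"
    unfolding cc_sponge_group_def ..
  then show ?thesis
    unfolding cone_order_def [abs_def] .
qed

end
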